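(* Let $c,\rho\in(0,1)$ with $c+\rho>1$. Suppose the conditional gradient algorithm chooses $\theta_k\in[0,1]$ with $\rho\hat\theta_k\le\theta_k\le\hat\theta_k$, where \[ \hat\theta_k=\max\{\theta\in[0,1]:(1-\theta)\mathrm{gap}(x_k,g_k)+\mathcal D(x_k,s_k,\theta)\le(1-c\theta)\mathrm{gap}(x_k,g_k)\}. \] Suppose $q>1$, $r\in[0,1]$ are such that $(\mathcal D,\mathrm{gap})$ satisfies the $(q,r)$-growth property with some finite $M>0$. Then for $k=0,1,\dots$ \[ \mathrm{gap}_{k+1}\le\mathrm{gap}_k\Big(1-(c+\rho-1)\min\Big\{1,\Big(\tfrac{q(1-c)}{M}\mathrm{gap}_k^{1-r}\Big)^{\frac1{q-1}}\Big\}\Big). \] If $r=1$ then $\mathrm{gap}_k\le\mathrm{gap}_0\big(1-(c+\rho-1)\min\{1,(q(1-c)/M)^{1/(q-1)}\}\big)^k$. If $r\in[0,1)$ then $\mathrm{gap}_k\le\mathrm{gap}_0(1-(c+\rho-1))^k$ for $k=0,\dots,k_0$, where $k_0$ is the smallest $k$ with $\mathrm{gap}_k^{1-r}\le\frac{M}{q(1-c)}$, and for $k\ge k_0$ \[ \mathrm{gap}_k\le\Big(\mathrm{gap}_{k_0}^{\frac{r-1}{q-1}}+\frac{(1-r)(c+\rho-1)}{q-1}\Big(\frac{q(1-c)}{M}\Big)^{\frac1{q-1}}(k-k_0)\Big)^{\frac{q-1}{r-1}}. \]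
   Context: Let $f,\Psi:\mathbb{R}^n\to\mathbb{R}\cup\{\infty\}$ be closed proper convex functions such that (A1) $f$ is differentiable on $\mathrm{dom}(\Psi)$, and (A2) for every $x\in\mathrm{dom}(f)$ the set $\arg\min_s\{\langle\nabla f(x),s\rangle+\Psi(s)\}$ is nonempty. $f^*,\Psi^*$ denote convex conjugates; $\arg\min_y\{\langle g,y\rangle+\Psi(y)\}=\partial\Psi^*(-g)$. $D_f(y,x)=f(y)-f(x)-\langle\nabla f(x),y-x\rangle$. Duality gap: $\mathrm{gap}(x,u)=f(x)+\Psi(x)+f^*(u)+\Psi^*(-u)$ for $x\in\mathrm{dom}(\Psi)$, $u\in\mathrm{dom}(f^* )$. For $x,s\in\mathrm{dom}(\Psi)$, $\theta\in[0,1]$: $\mathcal{D}(x,s,\theta)=D_f(x+\theta(s-x),x)+\Psi(x+\theta(s-x))-(1-\theta)\Psi(x)-\theta\Psi(s)$. Conditional gradient algorithm: given $x_0\in\mathrm{dom}(\Psi)$, for $k=0,1,2,\dots$ let $g_k=\nabla f(x_k)$, pick $s_k\in\arg\min_y\{\langle g_k,y\rangle+\Psi(y)\}$ and $\theta_k\in[0,1]$, and set $x_{k+1}=(1-\theta_k)x_k+\theta_k s_k$. The best duality gaps are $\mathrm{gap}_k=\min_{i=0,\dots,k}\mathrm{gap}(x_k,g_i)$. $(q,r)$-growth property ($q>1$, $r\in[0,1]$): there is a finite $M>0$ such that for all $x\in\mathrm{dom}(\Psi)$, $g=\nabla f(x)$ and $s\in\partial\Psi^*(-g)$, $\mathcal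 D(x,s,\theta)\le \frac{M\theta^q}{q}\mathrm{gap}(x,g)^r$ for all $\theta\in[0,1]$. *)

theory Defs
  imports "HOL-Analysis.Analysis"
begin

definition edom :: "('a \<Rightarrow> ereal) \<Rightarrow> 'a set" where
  "edom h = {x. h x < \<infinity>}"

definition closed_proper_convex :: "('a::euclidean_space \<Rightarrow> ereal) \<Rightarrow> bool" where
  "closed_proper_convex h \<longleftrightarrow>
     (\<forall>x. h x \<noteq> -\<infinity>) \<and> edom h \<noteq> {} \<and>
     convex {(x, t::real). h x \<le> ereal t} \<and> closed {(x, t::real). h x \<le> ereal t}"

definition fconj :: "('a::real_inner \<Rightarrow> ereal) \<Rightarrow> 'a \<Rightarrow> ereal" where
  "fconj h u = (SUP x. ereal (inner u x) - h x)"

definition esubdiff :: "('a::real_inner \<Rightarrow> ereal) \<Rightarrow> 'a \<Rightarrow> 'a set" where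
  "esubdiff h u = {s. \<bar>h u\<bar> \<noteq> \<infinity> \<and> (\<forall>v. h u + ereal (inner s (v - u)) \<le> h v)}"

definition argmin_lin :: "'a::real_inner \<Rightarrow> ('a \<Rightarrow> ereal) \<Rightarrow> 'a set" where
  "argmin_lin g \<Psi> = {s. \<forall>y. ereal (inner g s) + \<Psi> s \<le> ereal (inner g y) + \<Psi> y}"

text \<open>Bregman divergence D_f(y,x) (f finite at the relevant points).\<close>
definition bregman :: "('a::real_inner \<Rightarrow> ereal) \<Rightarrow> ('a \<Rightarrow> 'a) \<Rightarrow> 'a \<Rightarrow> 'a \<Rightarrow> real" where
  "bregman f gradf y x = real_of_ereal (f y) - real_of_ereal (f x) - inner (gradf x) (y - x)"

definition Dcal :: "('a::real_inner \<Rightarrow> ereal) \<Rightarrow> ('a \<Rightarrow> 'a) \<Rightarrow> ('a \<Rightarrow> ereal) \<Rightarrow> 'a \<Rightarrow> 'a \<Rightarrow> real \<Rightarrow> real" where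
  "Dcal f gradf \<Psi> x s \<theta> =
     bregman f gradf (x + \<theta> *\<^sub>R (s - x)) x + real_of_ereal (\<Psi> (x + \<theta> *\<^sub>R (s - x)))
     - (1 - \<theta>) * real_of_ereal (\<Psi> x) - \<theta> * real_of_ereal (\<Psi> s)"

text \<open>Duality gap gap(x,u) = f(x)+Psi(x)+f*(u)+Psi*(-u) (finite for the arguments used).\<close>
definition dgap :: "('a::real_inner \<Rightarrow> ereal) \<Rightarrow> ('a \<Rightarrow> ereal) \<Rightarrow> 'a \<Rightarrow> 'a \<Rightarrow> real" where
  "dgap f \<Psi> x u = real_of_ereal (f x + \<Psi> x + fconj f u + fconj \<Psi> (- u))"

text \<open>Real power with the convention a^0 = 1 (also for a = 0), unlike powr.\<close>
definition pw :: "real \<Rightarrow> real \<Rightarrow> real" where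
  "pw a b = (if b = 0 then 1 else a powr b)"

definition growth :: "('a::real_inner \<Rightarrow> ereal) \<Rightarrow> ('a \<Rightarrow> 'a) \<Rightarrow> ('a \<Rightarrow> ereal) \<Rightarrow> real \<Rightarrow> real \<Rightarrow> real \<Rightarrow> bool" where
  "growth f gradf \<Psi> q r M \<longleftrightarrow> 0 < M \<and>
     (\<forall>x \<in> edom \<Psi>. \<forall>s \<in> esubdiff (fconj \<Psi>) (- gradf x). \<forall>\<theta> \<in> {0..1}.
        Dcal f gradf \<Psi> x s \<theta> \<le> M * \<theta> powr q / q * pw (dgap f \<Psi> x (gradf x)) r)"

end

theory Submission
  imports Defs
begin

text \<open>Along the segment from x_k to s_k the objective f + \<Psi> changes by
  \<D>(x_k, s_k, \<theta>) - \<theta> gap(x_k, g_k), so a step passing the line-search test decreases it by at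
  least c \<theta> gap(x_k, g_k). By convexity \<D>(x, s, \<theta>) / \<theta> is nondecreasing in \<theta>, so every step
  \<theta>_k \<le> \<theta>h_k passes the test too, and the growth property shows
  \<theta>h_k \<ge> min {1, (q (1 - c) / M gap^(1-r))^(1/(q-1))}. As gap(x_k, g_i) is the objective at x_k plus a
  term depending on g_i alone, the best gap decreases at least as much as the objective; with
  c \<rho> \<ge> c + \<rho> - 1 this is the one-step recursion. Solving it: the decrease is geometric while the
  minimum is 1, and once gap_k^(1-r) \<le> M / (q (1 - c)), Bernoulli's inequality makes
  gap_k^(-(1-r)/(q-1)) grow at least linearly.\<close>

lemma closed_proper_convex_finite:
  assumes "closed_proper_convex h" "a \<in> edom h"
  shows "h a = ereal (real_of_ereal (h a))"
  using assms unfolding closed_proper_convex_def edom_def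
  by (cases "h a") auto

lemma closed_proper_convex_abs_finite:
  assumes "closed_proper_convex h" "a \<in> edom h"
  shows "\<bar>h a\<bar> \<noteq> \<infinity>"
  using assms unfolding closed_proper_convex_def edom_def
  by (cases "h a") auto

lemma closed_proper_convex_combination:
  assumes h: "closed_proper_convex h" and a: "a \<in> edom h" and b: "b \<in> edom h"
    and t: "0 \<le> t" "t \<le> 1"
  shows "h ((1 - t) *\<^sub>R a + t *\<^sub>R b) \<le> ereal ((1 - t) * real_of_ereal (h a) + t * real_of_ereal (h b))"
proof -
  let ?E = "{(x, t::real). h x \<le> ereal t}"
  have "convex ?E" using h unfolding closed_proper_convex_def by blast
  moreover have "(a, real_of_ereal (h a)) \<in> ?E" "(b, real_of_ereal (h b)) \<in> ?E"
    using closed_proper_convex_finite[OF h] a b by simp_all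
  ultimately have "(1 - t) *\<^sub>R (a, real_of_ereal (h a)) + t *\<^sub>R (b, real_of_ereal (h b)) \<in> ?E"
    using t by (rule convexD_alt)
  then show ?thesis by simp
qed

lemma convex_edom:
  assumes "closed_proper_convex h"
  shows "convex (edom h)"
  unfolding convex_alt
proof (intro ballI allI impI)
  fix a b and t :: real assume "a \<in> edom h" "b \<in> edom h" "0 \<le> t \<and> t \<le> 1"
  then show "(1 - t) *\<^sub>R a + t *\<^sub>R b \<in> edom h"
    using closed_proper_convex_combination[OF assms] unfolding edom_def
    by (fastforce intro: le_less_trans)
qed

lemma closed_proper_convex_real_combination:
  assumes h: "closed_proper_convex h" and a: "a \<in> edom h" and b: "b \<in> edom h"
    and t: "0 \<le> t" "t \<le> 1"
  shows "real_of_ereal (h ((1 - t) *\<^sub>R a + t *\<^sub>R b)) \<le> (1 - t) * real_of_ereal (h a) + t * real_of_ereal (h b)"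
  using closed_proper_convex_combination[OF assms]
    closed_proper_convex_finite[OF h convexD_alt[OF convex_edom[OF h] a b t]]
  by (metis ereal_less_eq(3))

lemma closed_proper_convex_gradient_ineq:
  assumes h: "closed_proper_convex f" and y0: "y0 \<in> edom f" and y: "y \<in> edom f"
    and der: "((\<lambda>z. real_of_ereal (f z)) has_derivative (\<lambda>h. inner g h)) (at y0)"
  shows "real_of_ereal (f y0) + inner g (y - y0) \<le> real_of_ereal (f y)"
proof -
  define \<phi> where "\<phi> t = real_of_ereal (f (y0 + t *\<^sub>R (y - y0)))" for t
  have "((\<lambda>t. y0 + t *\<^sub>R (y - y0)) has_derivative (\<lambda>t. t *\<^sub>R (y - y0))) (at 0)"
    by (auto intro!: derivative_eq_intros)
  from diff_chain_at[OF this, of "\<lambda>z. real_of_ereal (f z)" "inner g"] der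
  have "(\<phi> has_derivative (*) (inner g (y - y0))) (at 0)"
    by (simp add: \<phi>_def[abs_def] o_def mult.commute[of _ "inner g (y - y0)"])
  then have "(\<phi> has_field_derivative inner g (y - y0)) (at 0 within {0<..})"
    unfolding has_field_derivative_def by (rule has_derivative_at_withinI)
  then have lim: "((\<lambda>t. (\<phi> t - \<phi> 0) / (t - 0)) \<longlongrightarrow> inner g (y - y0)) (at_right 0)"
    unfolding has_field_derivative_iff by simp
  have "eventually (\<lambda>t. (\<phi> t - \<phi> 0) / (t - 0) \<le> real_of_ereal (f y) - real_of_ereal (f y0)) (at_right 0)"
    unfolding eventually_at_right_field
  proof (intro exI[of _ 1] conjI allI impI)
    fix t :: real assume t: "0 < t" "t < 1"
    have "y0 + t *\<^sub>R (y - y0) = (1 - t) *\<^sub>R y0 + t *\<^sub>R y" by (simp add: algebra_simps)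
    then have "\<phi> t - \<phi> 0 \<le> t * (real_of_ereal (f y) - real_of_ereal (f y0))"
      using closed_proper_convex_real_combination[OF h y0 y, of t] t
      by (simp add: \<phi>_def algebra_simps)
    then show "(\<phi> t - \<phi> 0) / (t - 0) \<le> real_of_ereal (f y) - real_of_ereal (f y0)"
      using t by (simp add: divide_le_eq mult.commute)
  qed simp
  from tendsto_upperbound[OF lim this] show ?thesis by simp
qed

lemma fconj_at_gradient:
  assumes h: "closed_proper_convex f" and y0: "y0 \<in> edom f"
    and der: "((\<lambda>z. real_of_ereal (f z)) has_derivative (\<lambda>h. inner g h)) (at y0)"
  shows "fconj f g = ereal (inner g y0 - real_of_ereal (f y0))"
proof (rule antisym)
  show "fconj f g \<le> ereal (inner g y0 - real_of_ereal (f y0))"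
    unfolding fconj_def
  proof (rule SUP_least)
    fix y
    show "ereal (inner g y) - f y \<le> ereal (inner g y0 - real_of_ereal (f y0))"
    proof (cases "y \<in> edom f")
      case True
      obtain ry where ry: "f y = ereal ry" using closed_proper_convex_finite[OF h True] by blast
      have "real_of_ereal (f y0) + inner g (y - y0) \<le> ry"
        using closed_proper_convex_gradient_ineq[OF h y0 True der] ry by simp
      then show ?thesis using ry by (simp add: inner_diff_right)
    qed (simp add: edom_def top.not_eq_extremum)
  qed
  show "ereal (inner g y0 - real_of_ereal (f y0)) \<le> fconj f g"
    unfolding fconj_def using closed_proper_convex_finite[OF h y0]
    by (intro SUP_upper2[of y0]) (simp_all, metis ereal_minus(1) order.refl)
qed

lemma argmin_lin_in_edom:
  assumes h: "closed_proper_convex \<Psi>" and s: "s \<in> argmin_lin g \<Psi>"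
  shows "s \<in> edom \<Psi>"
proof -
  obtain y where y: "y \<in> edom \<Psi>" using h unfolding closed_proper_convex_def by blast
  have "ereal (inner g s) + \<Psi> s \<le> ereal (inner g y) + \<Psi> y"
    using s unfolding argmin_lin_def by blast
  also have "\<dots> < \<infinity>" using closed_proper_convex_finite[OF h y] by (cases "\<Psi> y") simp_all
  finally show ?thesis unfolding edom_def by auto
qed

lemma argmin_lin_le:
  assumes h: "closed_proper_convex \<Psi>" and s: "s \<in> argmin_lin g \<Psi>" and y: "y \<in> edom \<Psi>"
  shows "inner g s + real_of_ereal (\<Psi> s) \<le> inner g y + real_of_ereal (\<Psi> y)"
proof -
  have "ereal (inner g s) + \<Psi> s \<le> ereal (inner g y) + \<Psi> y"
    using s unfolding argmin_lin_def by blast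
  then show ?thesis
    using closed_proper_convex_finite[OF h y] closed_proper_convex_finite[OF h argmin_lin_in_edom[OF h s]]
    by (cases "\<Psi> s"; cases "\<Psi> y") simp_all
qed

lemma fconj_neg_at_argmin:
  assumes h: "closed_proper_convex \<Psi>" and s: "s \<in> argmin_lin g \<Psi>"
  shows "fconj \<Psi> (- g) = ereal (- inner g s - real_of_ereal (\<Psi> s))"
proof (rule antisym)
  have rs: "\<Psi> s = ereal (real_of_ereal (\<Psi> s))"
    using closed_proper_convex_finite[OF h argmin_lin_in_edom[OF h s]] .
  show "fconj \<Psi> (- g) \<le> ereal (- inner g s - real_of_ereal (\<Psi> s))"
    unfolding fconj_def
  proof (rule SUP_least)
    fix y
    show "ereal (inner (- g) y) - \<Psi> y \<le> ereal (- inner g s - real_of_ereal (\<Psi> s))"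
    proof (cases "y \<in> edom \<Psi>")
      case True
      obtain ry where ry: "\<Psi> y = ereal ry" using closed_proper_convex_finite[OF h True] by blast
      show ?thesis using argmin_lin_le[OF h s True] ry by simp
    qed (simp add: edom_def top.not_eq_extremum)
  qed
  show "ereal (- inner g s - real_of_ereal (\<Psi> s)) \<le> fconj \<Psi> (- g)"
    unfolding fconj_def by (rule SUP_upper2[of s]) (simp_all, subst rs, simp)
qed

lemma argmin_lin_subdiff_fconj:
  assumes h: "closed_proper_convex \<Psi>" and s: "s \<in> argmin_lin g \<Psi>"
  shows "s \<in> esubdiff (fconj \<Psi>) (- g)"
  unfolding esubdiff_def
proof (intro CollectI conjI allI)
  note conj_s = fconj_neg_at_argmin[OF h s]
  show "\<bar>fconj \<Psi> (- g)\<bar> \<noteq> \<infinity>" using conj_s by simp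
  fix v
  have "ereal (inner v s) - \<Psi> s \<le> fconj \<Psi> v" unfolding fconj_def by (rule SUP_upper) simp
  moreover have "ereal (inner v s) - \<Psi> s = fconj \<Psi> (- g) + ereal (inner s (v - - g))"
    using conj_s closed_proper_convex_finite[OF h argmin_lin_in_edom[OF h s]]
    by (cases "\<Psi> s") (simp_all add: inner_add_right inner_commute)
  ultimately show "fconj \<Psi> (- g) + ereal (inner s (v - - g)) \<le> fconj \<Psi> v" by simp
qed

definition objective :: "('a \<Rightarrow> ereal) \<Rightarrow> ('a \<Rightarrow> ereal) \<Rightarrow> 'a \<Rightarrow> real" where
  "objective f \<Psi> z = real_of_ereal (f z) + real_of_ereal (\<Psi> z)"

text \<open>Minus the Fenchel dual objective, so that gap(x, u) = objective x + dual_value u.\<close>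

definition dual_value :: "('a::real_inner \<Rightarrow> ereal) \<Rightarrow> ('a \<Rightarrow> ereal) \<Rightarrow> 'a \<Rightarrow> real" where
  "dual_value f \<Psi> u = real_of_ereal (fconj f u) + real_of_ereal (fconj \<Psi> (- u))"

lemma dgap_nonneg:
  assumes "\<bar>f x\<bar> \<noteq> \<infinity>" "\<bar>\<Psi> x\<bar> \<noteq> \<infinity>"
  shows "0 \<le> dgap f \<Psi> x u"
proof -
  obtain a b where ab: "f x = ereal a" "\<Psi> x = ereal b" using assms by fastforce
  have "ereal (inner u x - a) \<le> fconj f u" "ereal (inner (- u) x - b) \<le> fconj \<Psi> (- u)"
    unfolding fconj_def using ab by (auto intro!: SUP_upper2[of x])
  then have "ereal a + ereal b + ereal (inner u x - a) + ereal (inner (- u) x - b)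
      \<le> f x + \<Psi> x + fconj f u + fconj \<Psi> (- u)"
    unfolding ab by (intro add_mono) auto
  then have "0 \<le> f x + \<Psi> x + fconj f u + fconj \<Psi> (- u)" by (simp add: zero_ereal_def)
  then show ?thesis unfolding dgap_def by (rule real_of_ereal_pos)
qed

lemma dgap_eq_objective_plus_dual:
  assumes "\<bar>f x\<bar> \<noteq> \<infinity>" "\<bar>\<Psi> x\<bar> \<noteq> \<infinity>" "\<bar>fconj f u\<bar> \<noteq> \<infinity>" "\<bar>fconj \<Psi> (- u)\<bar> \<noteq> \<infinity>"
  shows "dgap f \<Psi> x u = objective f \<Psi> x + dual_value f \<Psi> u"
  using assms unfolding dgap_def objective_def dual_value_def
  by (cases "f x"; cases "\<Psi> x"; cases "fconj f u"; cases "fconj \<Psi> (- u)") simp_all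

lemma Dcal_zero [simp]: "Dcal f gradf \<Psi> x s 0 = 0"
  by (simp add: Dcal_def bregman_def)

lemma Dcal_le_scaled:
  assumes f: "closed_proper_convex f" and \<Psi>: "closed_proper_convex \<Psi>" and dom: "edom \<Psi> \<subseteq> edom f"
    and x: "x \<in> edom \<Psi>" and s: "s \<in> edom \<Psi>" and tu: "0 \<le> t" "t \<le> u" "u \<le> 1" "0 < u"
  shows "Dcal f gradf \<Psi> x s t \<le> t / u * Dcal f gradf \<Psi> x s u"
proof -
  define z where "z \<tau> = x + \<tau> *\<^sub>R (s - x)" for \<tau>
  define l where "l = t / u"
  have l: "0 \<le> l" "l \<le> 1" "t = l * u" unfolding l_def using tu by auto
  have "z u = (1 - u) *\<^sub>R x + u *\<^sub>R s" unfolding z_def by (simp add: algebra_simps)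
  then have zu: "z u \<in> edom \<Psi>" using convexD_alt[OF convex_edom[OF \<Psi>] x s] tu by simp
  have zt: "z t = (1 - l) *\<^sub>R x + l *\<^sub>R z u" unfolding z_def l(3) by (simp add: algebra_simps)
  have "real_of_ereal (f (z t)) \<le> (1 - l) * real_of_ereal (f x) + l * real_of_ereal (f (z u))"
    unfolding zt using closed_proper_convex_real_combination[OF f _ _ l(1,2)] dom x zu by blast
  moreover have "real_of_ereal (\<Psi> (z t)) \<le> (1 - l) * real_of_ereal (\<Psi> x) + l * real_of_ereal (\<Psi> (z u))"
    unfolding zt using closed_proper_convex_real_combination[OF \<Psi> x zu l(1,2)] .
  ultimately show ?thesis
    unfolding Dcal_def bregman_def z_def[symmetric] l_def[symmetric]
    by (simp add: z_def l(3) algebra_simps)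
qed

lemma Dcal_sublevel_closed:
  assumes \<Psi>: "closed_proper_convex \<Psi>" and cont: "\<forall>y \<in> edom \<Psi>. isCont (\<lambda>z. real_of_ereal (f z)) y"
    and x: "x \<in> edom \<Psi>" and s: "s \<in> edom \<Psi>" and k: "continuous_on {0..1} k"
  shows "closed {t \<in> {0..1}. Dcal f gradf \<Psi> x s t \<le> k t}"
proof -
  define z where "z t = x + t *\<^sub>R (s - x)" for t
  define h where "h t = k t - bregman f gradf (z t) x + (1 - t) * real_of_ereal (\<Psi> x)
                        + t * real_of_ereal (\<Psi> s)" for t
  define E where "E = {(y, t::real). \<Psi> y \<le> ereal t}"
  have zdom: "z t \<in> edom \<Psi>" if "t \<in> {0..1}" for t
    using convexD_alt[OF convex_edom[OF \<Psi>] x s, of t] that by (simp add: z_def algebra_simps)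
  have "Dcal f gradf \<Psi> x s t \<le> k t \<longleftrightarrow> (z t, h t) \<in> E" if "t \<in> {0..1}" for t
  proof -
    have "Dcal f gradf \<Psi> x s t \<le> k t \<longleftrightarrow> real_of_ereal (\<Psi> (z t)) \<le> h t"
      unfolding Dcal_def h_def z_def by linarith
    also have "\<dots> \<longleftrightarrow> \<Psi> (z t) \<le> ereal (h t)"
      by (subst closed_proper_convex_finite[OF \<Psi> zdom[OF that]]) simp
    finally show ?thesis unfolding E_def by simp
  qed
  then have "{t \<in> {0..1}. Dcal f gradf \<Psi> x s t \<le> k t} = {0..1} \<inter> (\<lambda>t. (z t, h t)) -` E"
    by auto
  moreover have "continuous_on {0..1} (\<lambda>t. (z t, h t))"
  proof -
    have "continuous_on {0..1} (\<lambda>t. real_of_ereal (f (z t)))"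
    proof (intro continuous_at_imp_continuous_on ballI)
      fix t :: real assume "t \<in> {0..1}"
      have "isCont z t" unfolding z_def by (intro continuous_intros)
      with cont zdom[OF \<open>t \<in> {0..1}\<close>] show "isCont (\<lambda>t. real_of_ereal (f (z t))) t"
        using continuous_at_compose[of t z] by (auto simp: o_def)
    qed
    then show ?thesis
      unfolding h_def bregman_def z_def by (intro continuous_intros k)
  qed
  moreover have "closed E" using \<Psi> unfolding closed_proper_convex_def E_def by blast
  ultimately show ?thesis by (simp add: continuous_closed_preimage)
qed

lemma Greatest_eq_Sup_closed:
  fixes S :: "real set"
  assumes "closed S" "S \<noteq> {}" "bdd_above S"
  shows "(GREATEST t. t \<in> S) = Sup S"
  using assms by (intro Greatest_equality) (auto intro: closed_contains_Sup cSup_upper)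

lemma line_search_step:
  assumes \<Psi>: "closed_proper_convex \<Psi>" and cont: "\<forall>y \<in> edom \<Psi>. isCont (\<lambda>z. real_of_ereal (f z)) y"
    and x: "x \<in> edom \<Psi>" and s: "s \<in> edom \<Psi>"
    and \<theta>h: "\<theta>h = (GREATEST t. t \<in> {0..1} \<and>
          (1 - t) * gp + Dcal f gradf \<Psi> x s t \<le> (1 - c * t) * gp)"
  shows "\<theta>h \<in> {0..1}" "Dcal f gradf \<Psi> x s \<theta>h \<le> (1 - c) * \<theta>h * gp"
    and "\<And>t. t \<in> {0..1} \<Longrightarrow> Dcal f gradf \<Psi> x s t \<le> (1 - c) * t * gp \<Longrightarrow> t \<le> \<theta>h"
proof -
  define S where "S = {t \<in> {0..1}. Dcal f gradf \<Psi> x s t \<le> (1 - c) * t * gp}"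
  have "\<theta>h = (GREATEST t. t \<in> S)"
    unfolding \<theta>h S_def by (rule arg_cong[where f = Greatest]) (auto simp: algebra_simps)
  moreover have "closed S"
    unfolding S_def by (intro Dcal_sublevel_closed[OF \<Psi> cont x s] continuous_intros)
  moreover have "0 \<in> S" "bdd_above S" unfolding S_def by (auto intro: bdd_aboveI[of _ 1])
  ultimately have "\<theta>h = Sup S" "Sup S \<in> S"
    using Greatest_eq_Sup_closed closed_contains_Sup by blast+
  then show "\<theta>h \<in> {0..1}" "Dcal f gradf \<Psi> x s \<theta>h \<le> (1 - c) * \<theta>h * gp"
    and "\<And>t. t \<in> {0..1} \<Longrightarrow> Dcal f gradf \<Psi> x s t \<le> (1 - c) * t * gp \<Longrightarrow> t \<le> \<theta>h"
    using \<open>bdd_above S\<close> unfolding S_def by (auto intro: cSup_upper)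
qed

lemma pw_complementary_mult:
  assumes "0 \<le> g" "0 \<le> r" "r \<le> 1"
  shows "pw g (1 - r) * pw g r = g"
proof -
  consider "r = 0" | "r = 1" | "0 < r" "r < 1" using assms by linarith
  then show ?thesis
    by cases (use assms in \<open>simp_all add: pw_def powr_add[symmetric]\<close>)
qed

lemma growth_bound_imp_sufficient_decrease:
  fixes gp M q r c t D :: real
  assumes gp: "0 \<le> gp" and M: "0 < M" and q: "1 < q" and c: "c < 1" and r: "0 \<le> r" "r \<le> 1"
    and t: "0 \<le> t" "t \<le> (q * (1 - c) / M * pw gp (1 - r)) powr (1 / (q - 1))"
    and D: "D \<le> M * t powr q / q * pw gp r"
  shows "D \<le> (1 - c) * t * gp"
proof (cases "t = 0")
  case False
  define A where "A = q * (1 - c) / M * pw gp (1 - r)"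
  have A: "0 \<le> A" unfolding A_def pw_def using q c M by auto
  have "t powr (q - 1) \<le> (A powr (1 / (q - 1))) powr (q - 1)"
    using t q unfolding A_def by (intro powr_mono2) auto
  also have "\<dots> = A" using A q by (simp add: powr_powr)
  finally have tA: "t powr (q - 1) \<le> A" .
  have "M * t powr q / q * pw gp r = (M / q * t * pw gp r) * t powr (q - 1)"
    using False t by (simp add: powr_diff field_simps)
  also have "\<dots> \<le> (M / q * t * pw gp r) * A"
    using tA M q t by (intro mult_left_mono) (auto simp: pw_def)
  also have "\<dots> = (1 - c) * t * (pw gp (1 - r) * pw gp r)"
    unfolding A_def using M q by (simp add: field_simps)
  also have "\<dots> = (1 - c) * t * gp" using pw_complementary_mult[OF gp r] by simp
  finally show ?thesis using D by simp
qed (use D in simp)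

lemma dgap_at_gradient:
  assumes f: "closed_proper_convex f" and \<Psi>: "closed_proper_convex \<Psi>"
    and x: "x \<in> edom \<Psi>" "x \<in> edom f"
    and der: "((\<lambda>z. real_of_ereal (f z)) has_derivative (\<lambda>h. inner (gradf x) h)) (at x)"
    and s: "s \<in> argmin_lin (gradf x) \<Psi>"
  shows "dgap f \<Psi> x (gradf x) = real_of_ereal (\<Psi> x) - real_of_ereal (\<Psi> s) - inner (gradf x) (s - x)"
proof -
  note conj = fconj_at_gradient[OF f x(2) der] fconj_neg_at_argmin[OF \<Psi> s]
  obtain a b where "f x = ereal a" "\<Psi> x = ereal b"
    using closed_proper_convex_finite[OF f x(2)] closed_proper_convex_finite[OF \<Psi> x(1)] by blast
  then have "dgap f \<Psi> x (gradf x) = objective f \<Psi> x + dual_value f \<Psi> (gradf x)"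
    using conj by (intro dgap_eq_objective_plus_dual) simp_all
  then show ?thesis
    using conj by (simp add: objective_def dual_value_def inner_diff_right)
qed

lemma objective_step_eq:
  "objective f \<Psi> ((1 - \<theta>) *\<^sub>R x + \<theta> *\<^sub>R s) - objective f \<Psi> x
     = Dcal f gradf \<Psi> x s \<theta>
       - \<theta> * (real_of_ereal (\<Psi> x) - real_of_ereal (\<Psi> s) - inner (gradf x) (s - x))"
proof -
  have "(1 - \<theta>) *\<^sub>R x + \<theta> *\<^sub>R s = x + \<theta> *\<^sub>R (s - x)" by (simp add: algebra_simps)
  then show ?thesis
    by (simp add: objective_def Dcal_def bregman_def algebra_simps)
qed

lemma conditional_gradient_step_decrease:
  fixes f \<Psi> :: "'a::euclidean_space \<Rightarrow> ereal"
  assumes f: "closed_proper_convex f" and \<Psi>: "closed_proper_convex \<Psi>"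
    and diff: "\<forall>y \<in> edom \<Psi>. y \<in> edom f \<and>
               ((\<lambda>z. real_of_ereal (f z)) has_derivative (\<lambda>h. inner (gradf y) h)) (at y)"
    and x: "x \<in> edom \<Psi>" and s: "s \<in> argmin_lin (gradf x) \<Psi>"
    and c: "0 \<le> c" "c < 1" and \<rho>: "0 \<le> \<rho>"
    and \<theta>h: "\<theta>h = (GREATEST t. t \<in> {0..1} \<and>
          (1 - t) * dgap f \<Psi> x (gradf x) + Dcal f gradf \<Psi> x s t \<le> (1 - c * t) * dgap f \<Psi> x (gradf x))"
    and \<theta>: "\<rho> * \<theta>h \<le> \<theta>" "\<theta> \<le> \<theta>h"
    and q: "1 < q" and r: "0 \<le> r" "r \<le> 1" and grow: "growth f gradf \<Psi> q r M"
  shows "objective f \<Psi> ((1 - \<theta>) *\<^sub>R x + \<theta> *\<^sub>R s) - objective f \<Psi> x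
     \<le> - (c * \<rho>) * min 1 ((q * (1 - c) / M * pw (dgap f \<Psi> x (gradf x)) (1 - r)) powr (1 / (q - 1)))
          * dgap f \<Psi> x (gradf x)"
proof -
  define gp where "gp = dgap f \<Psi> x (gradf x)"
  define D where "D t = Dcal f gradf \<Psi> x s t" for t
  define m where "m = min 1 ((q * (1 - c) / M * pw gp (1 - r)) powr (1 / (q - 1)))"
  have xf: "x \<in> edom f" and der: "((\<lambda>z. real_of_ereal (f z)) has_derivative (\<lambda>h. inner (gradf x) h)) (at x)"
    using diff x by auto
  have cont: "\<forall>y \<in> edom \<Psi>. isCont (\<lambda>z. real_of_ereal (f z)) y"
    using diff has_derivative_continuous by blast
  have sdom: "s \<in> edom \<Psi>" by (rule argmin_lin_in_edom[OF \<Psi> s])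
  have gp_eq: "gp = real_of_ereal (\<Psi> x) - real_of_ereal (\<Psi> s) - inner (gradf x) (s - x)"
    unfolding gp_def by (rule dgap_at_gradient[where gradf = gradf, OF f \<Psi> x xf der s])
  have gp0: "0 \<le> gp"
    unfolding gp_def
    by (intro dgap_nonneg closed_proper_convex_abs_finite[OF f xf] closed_proper_convex_abs_finite[OF \<Psi> x])
  note line_search = line_search_step[OF \<Psi> cont x sdom \<theta>h, folded gp_def D_def]
  have M: "0 < M" using grow unfolding growth_def by simp
  have m01: "m \<in> {0..1}" unfolding m_def by auto
  have "D m \<le> M * m powr q / q * pw gp r"
    using grow unfolding growth_def D_def gp_def
    by (auto intro!: x argmin_lin_subdiff_fconj[OF \<Psi> s] m01 dest!: conjunct2)
  then have "D m \<le> (1 - c) * m * gp"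
    using m01 by (intro growth_bound_imp_sufficient_decrease[OF gp0 M q c(2) r]) (auto simp: m_def)
  then have m_le: "m \<le> \<theta>h" using line_search(3) m01 by blast
  have D\<theta>: "D \<theta> \<le> (1 - c) * \<theta> * gp"
  proof (cases "\<theta>h = 0")
    case False
    then have "0 < \<theta>h" using line_search(1) by simp
    moreover have "0 \<le> \<theta>" using \<theta> \<rho> line_search(1) by (meson atLeastAtMost_iff order_trans mult_nonneg_nonneg)
    ultimately have "D \<theta> \<le> \<theta> / \<theta>h * D \<theta>h"
      unfolding D_def using line_search(1) \<theta>(2) diff x sdom
      by (intro Dcal_le_scaled[OF f \<Psi>]) auto
    also have "\<dots> \<le> \<theta> / \<theta>h * ((1 - c) * \<theta>h * gp)"
      using line_search(2) \<open>0 \<le> \<theta>\<close> \<open>0 < \<theta>h\<close> by (intro mult_left_mono) auto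
    also have "\<dots> = (1 - c) * \<theta> * gp" using \<open>0 < \<theta>h\<close> by simp
    finally show ?thesis .
  qed (use \<theta> \<rho> in \<open>simp add: D_def\<close>)
  have "objective f \<Psi> ((1 - \<theta>) *\<^sub>R x + \<theta> *\<^sub>R s) - objective f \<Psi> x = D \<theta> - \<theta> * gp"
    unfolding D_def gp_eq by (rule objective_step_eq)
  also have "\<dots> \<le> - c * \<theta> * gp" using D\<theta> by (simp add: algebra_simps)
  also have "\<dots> \<le> - c * (\<rho> * m) * gp"
  proof -
    have "\<rho> * m \<le> \<theta>" using \<theta>(1) m_le \<rho> by (meson mult_left_mono order_trans)
    then show ?thesis using c gp0 by (intro mult_right_mono mult_left_mono_neg) auto
  qed
  finally show ?thesis unfolding m_def gp_def by (simp add: mult_ac)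
qed

lemma pw_mono:
  assumes "0 \<le> a" "a \<le> b" "0 \<le> e"
  shows "pw a e \<le> pw b e"
  using assms unfolding pw_def by (auto intro: powr_mono2)

locale conditional_gradient =
  fixes f \<Psi> :: "'a::euclidean_space \<Rightarrow> ereal" and gradf :: "'a \<Rightarrow> 'a"
    and x s :: "nat \<Rightarrow> 'a" and \<theta> \<theta>h :: "nat \<Rightarrow> real" and c \<rho> q r M :: real
  assumes f_cpc: "closed_proper_convex f" and Psi_cpc: "closed_proper_convex \<Psi>"
    and differentiable: "\<forall>y \<in> edom \<Psi>. y \<in> edom f \<and>
               ((\<lambda>z. real_of_ereal (f z)) has_derivative (\<lambda>h. inner (gradf y) h)) (at y)"
    and x0: "x 0 \<in> edom \<Psi>"
    and s_argmin: "\<And>k. s k \<in> argmin_lin (gradf (x k)) \<Psi>"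
    and x_step: "\<And>k. x (Suc k) = (1 - \<theta> k) *\<^sub>R x k + \<theta> k *\<^sub>R s k"
    and theta01: "\<And>k. \<theta> k \<in> {0..1}"
    and theta_hat: "\<And>k. \<theta>h k = (GREATEST t. t \<in> {0..1} \<and>
          (1 - t) * dgap f \<Psi> (x k) (gradf (x k)) + Dcal f gradf \<Psi> (x k) (s k) t
            \<le> (1 - c * t) * dgap f \<Psi> (x k) (gradf (x k)))"
    and theta_bounds: "\<And>k. \<rho> * \<theta>h k \<le> \<theta> k" "\<And>k. \<theta> k \<le> \<theta>h k"
    and c: "0 \<le> c" "c < 1" and rho: "0 \<le> \<rho>"
    and q: "1 < q" and r: "0 \<le> r" "r \<le> 1" and grow: "growth f gradf \<Psi> q r M"
begin

definition best_gap :: "nat \<Rightarrow> real" where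
  "best_gap k = Min ((\<lambda>i. dgap f \<Psi> (x k) (gradf (x i))) ` {..k})"

lemma iterate_in_edom: "x k \<in> edom \<Psi>"
proof (induction k)
  case (Suc k)
  show ?case
    unfolding x_step using convexD_alt[OF convex_edom[OF Psi_cpc] Suc argmin_lin_in_edom[OF Psi_cpc s_argmin]]
      theta01[of k] by simp
qed (rule x0)

lemma dgap_iterates:
  "dgap f \<Psi> (x k) (gradf (x i)) = objective f \<Psi> (x k) + dual_value f \<Psi> (gradf (x i))"
proof -
  have "x k \<in> edom f" using differentiable iterate_in_edom by blast
  moreover have "fconj f (gradf (x i)) = ereal (inner (gradf (x i)) (x i) - real_of_ereal (f (x i)))"
    using differentiable iterate_in_edom[of i] by (intro fconj_at_gradient[OF f_cpc]) auto
  ultimately show ?thesis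
    by (intro dgap_eq_objective_plus_dual closed_proper_convex_abs_finite[OF f_cpc]
        closed_proper_convex_abs_finite[OF Psi_cpc iterate_in_edom])
      (simp_all add: fconj_neg_at_argmin[OF Psi_cpc s_argmin])
qed

lemma best_gap_eq:
  "best_gap k = objective f \<Psi> (x k) + Min ((\<lambda>i. dual_value f \<Psi> (gradf (x i))) ` {..k})"
  unfolding best_gap_def dgap_iterates using Min_add_commute[of "{..k}"] by (simp add: add.commute)

lemma best_gap_le_dgap: "best_gap k \<le> dgap f \<Psi> (x k) (gradf (x k))"
  unfolding best_gap_def by (rule Min_le) auto

lemma best_gap_nonneg: "0 \<le> best_gap k"
proof -
  have "x k \<in> edom f" using differentiable iterate_in_edom by blast
  then show ?thesis
    unfolding best_gap_def
    by (auto intro!: dgap_nonneg closed_proper_convex_abs_finite[OF f_cpc]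
        closed_proper_convex_abs_finite[OF Psi_cpc iterate_in_edom])
qed

lemma best_gap_step:
  defines "rate g \<equiv> min 1 ((q * (1 - c) / M * pw g (1 - r)) powr (1 / (q - 1)))"
  shows "best_gap (Suc k) \<le> best_gap k * (1 - c * \<rho> * rate (best_gap k))"
proof -
  let ?gp = "dgap f \<Psi> (x k) (gradf (x k))"
  have M: "0 < M" using grow unfolding growth_def by simp
  have rate_mono: "rate g * g \<le> rate g' * g'" if "0 \<le> g" "g \<le> g'" for g g'
  proof -
    have "pw g (1 - r) \<le> pw g' (1 - r)" using pw_mono that r by simp
    then have "rate g \<le> rate g'"
      unfolding rate_def using M q c by (intro min.mono powr_mono2 mult_left_mono) (auto simp: pw_def)
    then show ?thesis using that by (intro mult_mono) (auto simp: rate_def)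
  qed
  have "best_gap (Suc k) \<le> objective f \<Psi> (x (Suc k)) + Min ((\<lambda>i. dual_value f \<Psi> (gradf (x i))) ` {..k})"
    unfolding best_gap_eq by (simp add: Min_antimono image_mono)
  also have "\<dots> = best_gap k + (objective f \<Psi> (x (Suc k)) - objective f \<Psi> (x k))"
    unfolding best_gap_eq by simp
  also have "\<dots> \<le> best_gap k - c * \<rho> * (rate ?gp * ?gp)"
    using conditional_gradient_step_decrease[OF f_cpc Psi_cpc differentiable iterate_in_edom s_argmin
        c rho theta_hat theta_bounds q r grow]
    unfolding x_step rate_def by (simp add: algebra_simps)
  also have "\<dots> \<le> best_gap k - c * \<rho> * (rate (best_gap k) * best_gap k)"
    using rate_mono[OF best_gap_nonneg best_gap_le_dgap] c rho by (intro diff_left_mono mult_left_mono) auto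
  finally show ?thesis by (simp add: algebra_simps)
qed

end

lemma le_geometric:
  fixes G :: "nat \<Rightarrow> real"
  assumes a: "0 \<le> a" and step: "\<And>k. k < n \<Longrightarrow> G (Suc k) \<le> G k * a" and "k \<le> n"
  shows "G k \<le> G 0 * a ^ k"
  using \<open>k \<le> n\<close>
proof (induction k)
  case (Suc k)
  then have "G (Suc k) \<le> G k * a" using step by simp
  also have "\<dots> \<le> G 0 * a ^ k * a" using Suc a by (intro mult_right_mono) auto
  finally show ?case by (simp add: mult_ac)
qed simp

lemma one_plus_mult_le_powr_neg:
  fixes y p :: real
  assumes "0 \<le> y" "y < 1" "0 < p"
  shows "1 + p * y \<le> (1 - y) powr (- p)"
proof -
  have "p * y \<le> p * - ln (1 - y)"
    using ln_le_minus_one[of "1 - y"] assms by (intro mult_left_mono) auto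
  then have "p * y \<le> - p * ln (1 - y)" by simp
  also have "1 + - p * ln (1 - y) \<le> exp (- p * ln (1 - y))" by (rule exp_ge_add_one_self)
  finally show ?thesis using assms by (simp add: powr_def)
qed

lemma powr_recursion_bound:
  fixes g :: "nat \<Rightarrow> real" and a p :: real
  assumes p: "0 < p" and a: "0 \<le> a" and nonneg: "\<And>n. 0 \<le> g n"
    and step: "\<And>n. g (Suc n) \<le> g n * (1 - a * g n powr p)"
    and small: "\<And>n. a * g n powr p < 1"
  shows "g n \<le> (g 0 powr (- p) + p * a * real n) powr (- (1 / p))"
proof -
  have "decseq g"
  proof (rule decseq_SucI)
    fix n
    have "g n * (1 - a * g n powr p) \<le> g n" using a nonneg[of n] by (simp add: mult_left_le)
    then show "g (Suc n) \<le> g n" using step[of n] by linarith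
  qed
  have claim: "g n = 0 \<or> g 0 powr (- p) + p * a * real n \<le> g n powr (- p)" for n
  proof (induction n)
    case (Suc n)
    show ?case
    proof (cases "g (Suc n) = 0")
      case False
      define y where "y = a * g n powr p"
      have y: "0 \<le> y" "y < 1" unfolding y_def using a small by simp_all
      have "0 < g (Suc n)" using False nonneg by (simp add: order_less_le)
      moreover have "g (Suc n) \<le> g n" using \<open>decseq g\<close> by (simp add: decseqD)
      ultimately have gn: "0 < g n" by simp
      have "g n powr (- p) + p * a = g n powr (- p) * (1 + p * y)"
        using gn by (simp add: y_def algebra_simps powr_add[symmetric])
      also have "\<dots> \<le> g n powr (- p) * (1 - y) powr (- p)"
        using one_plus_mult_le_powr_neg[OF y p] by (simp add: mult_left_mono)
      also have "\<dots> = (g n * (1 - y)) powr (- p)" using gn y by (simp add: powr_mult)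
      also have "\<dots> \<le> g (Suc n) powr (- p)"
        using step[of n] \<open>0 < g (Suc n)\<close> p unfolding y_def by (intro powr_mono2') auto
      finally show ?thesis using Suc gn by (auto simp: algebra_simps)
    qed simp
  qed simp
  show ?thesis
  proof (cases "g n = 0")
    case False
    then have "0 < g n" using nonneg by (simp add: order_less_le)
    moreover have "g n \<le> g 0" using \<open>decseq g\<close> by (simp add: decseqD)
    ultimately have "0 < g 0 powr (- p) + p * a * real n" using p a by (intro add_pos_nonneg) auto
    moreover have "g 0 powr (- p) + p * a * real n \<le> g n powr (- p)" using claim False by blast
    ultimately have "(g n powr (- p)) powr (- (1 / p)) \<le> (g 0 powr (- p) + p * a * real n) powr (- (1 / p))"
      using p by (intro powr_mono2') auto
    then show ?thesis using \<open>0 < g n\<close> p by (simp add: powr_powr)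
  qed simp
qed

locale gap_recursion =
  fixes G :: "nat \<Rightarrow> real" and b C q r :: real
  assumes nonneg: "\<And>k. 0 \<le> G k"
    and step: "\<And>k. G (Suc k) \<le> G k * (1 - b * min 1 ((C * pw (G k) (1 - r)) powr (1 / (q - 1))))"
    and b: "0 < b" "b < 1" and C: "0 < C" and q: "1 < q" and r: "0 \<le> r" "r \<le> 1"
begin

lemma decreasing: "decseq G"
proof (rule decseq_SucI)
  fix k
  have "0 \<le> b * min 1 ((C * pw (G k) (1 - r)) powr (1 / (q - 1)))" using b by simp
  then have "G k * (1 - b * min 1 ((C * pw (G k) (1 - r)) powr (1 / (q - 1)))) \<le> G k"
    using nonneg[of k] by (simp add: mult_left_le)
  then show "G (Suc k) \<le> G k" using step[of k] by linarith
qed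

lemma linear_rate:
  assumes "r = 1"
  shows "G k \<le> G 0 * (1 - b * min 1 (C powr (1 / (q - 1)))) ^ k"
proof (rule le_geometric)
  show "0 \<le> 1 - b * min 1 (C powr (1 / (q - 1)))"
    using mult_left_le[of "min 1 (C powr (1 / (q - 1)))" b] b by linarith
  show "G (Suc j) \<le> G j * (1 - b * min 1 (C powr (1 / (q - 1))))" for j
    using step[of j] assms by (simp add: pw_def)
qed (rule order_refl)

lemma full_step_above_threshold:
  assumes "r < 1" "\<not> G k powr (1 - r) \<le> 1 / C"
  shows "G (Suc k) \<le> G k * (1 - b)"
proof -
  have "1 \<le> C * pw (G k) (1 - r)" using assms C by (simp add: pw_def field_simps)
  then have "min 1 ((C * pw (G k) (1 - r)) powr (1 / (q - 1))) = 1"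
    using ge_one_powr_ge_zero[of _ "1 / (q - 1)"] q by (simp add: min_def)
  then show ?thesis using step[of k] by simp
qed

lemma geometric_phase:
  assumes "r < 1" "\<forall>j<k0. \<not> G j powr (1 - r) \<le> 1 / C" "k \<le> k0"
  shows "G k \<le> G 0 * (1 - b) ^ k"
  using assms b by (intro le_geometric[of _ k0] full_step_above_threshold) auto

lemma threshold_reached:
  assumes "r < 1"
  shows "\<exists>k. G k powr (1 - r) \<le> 1 / C"
proof (rule ccontr)
  assume above: "\<nexists>k. G k powr (1 - r) \<le> 1 / C"
  define \<epsilon> where "\<epsilon> = (1 / C) powr (1 / (1 - r))"
  have "0 < \<epsilon>" unfolding \<epsilon>_def using C by simp
  moreover have "(\<lambda>k. G 0 * (1 - b) ^ k) \<longlonglongrightarrow> G 0 * 0"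
    using b by (intro tendsto_mult tendsto_const LIMSEQ_power_zero) simp
  ultimately have "\<forall>\<^sub>F k in sequentially. G 0 * (1 - b) ^ k < \<epsilon>"
    by (simp add: order_tendstoD(2))
  then obtain k where "G 0 * (1 - b) ^ k < \<epsilon>" by (auto simp: eventually_sequentially)
  then have "G k < \<epsilon>" using geometric_phase[OF assms, of k k] above by auto
  then have "G k powr (1 - r) < \<epsilon> powr (1 - r)"
    using nonneg assms by (intro powr_less_mono2) auto
  also have "\<epsilon> powr (1 - r) = 1 / C" unfolding \<epsilon>_def powr_powr using assms C by simp
  finally show False using above less_imp_le by blast
qed

lemma sublinear_phase:
  assumes r1: "r < 1" and k0: "G k0 powr (1 - r) \<le> 1 / C" and "k0 \<le> k"
  shows "G k \<le> (G k0 powr ((r - 1) / (q - 1))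
                + (1 - r) * b / (q - 1) * C powr (1 / (q - 1)) * real (k - k0)) powr ((q - 1) / (r - 1))"
proof -
  define p where "p = (1 - r) / (q - 1)"
  define K where "K = C powr (1 / (q - 1))"
  have p: "0 < p" unfolding p_def using r1 q by simp
  have rate: "min 1 ((C * pw (G j) (1 - r)) powr (1 / (q - 1))) = K * G j powr p" if "k0 \<le> j" for j
  proof -
    have "G j powr (1 - r) \<le> G k0 powr (1 - r)"
      using decreasing that nonneg r1 by (intro powr_mono2) (auto simp: decseqD)
    also have "\<dots> \<le> 1 / C" by (rule k0)
    finally have "C * G j powr (1 - r) \<le> 1" using C by (simp add: field_simps)
    then have "(C * G j powr (1 - r)) powr (1 / (q - 1)) \<le> 1"
      using C q by (intro powr_le1) auto
    then show ?thesis
      using r1 C nonneg q by (simp add: pw_def K_def p_def powr_mult powr_powr)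
  qed
  have "G (k0 + n) \<le> (G k0 powr (- p) + p * (b * K) * real n) powr (- (1 / p))" for n
  proof (rule powr_recursion_bound[of p "b * K" "\<lambda>n. G (k0 + n)", simplified])
    show "0 < p" "0 \<le> b * K" "\<And>n. 0 \<le> G (k0 + n)" using p b C nonneg by (simp_all add: K_def)
    show "G (Suc (k0 + n)) \<le> G (k0 + n) * (1 - b * K * G (k0 + n) powr p)" for n
      using step[of "k0 + n"] rate[of "k0 + n"] by (simp add: mult.assoc)
    show "b * K * G (k0 + n) powr p < 1" for n
    proof -
      have "b * (K * G (k0 + n) powr p) \<le> b"
        using rate[of "k0 + n", symmetric] b by (intro mult_left_le) auto
      then show ?thesis unfolding mult.assoc using b by linarith
    qed
  qed
  moreover obtain n where "k = k0 + n" using \<open>k0 \<le> k\<close> le_Suc_ex by blast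
  moreover have "(r - 1) / (q - 1) = - p" "(q - 1) / (r - 1) = - (1 / p)"
    "(1 - r) * b / (q - 1) * C powr (1 / (q - 1)) = p * (b * K)"
    unfolding p_def K_def using r1 q by (simp_all add: field_simps)
  ultimately show ?thesis by simp
qed

end

theorem theorem2:
  fixes f \<Psi> :: "'a::euclidean_space \<Rightarrow> ereal" and gradf :: "'a \<Rightarrow> 'a"
    and x s :: "nat \<Rightarrow> 'a" and \<theta> \<theta>h G :: "nat \<Rightarrow> real" and c \<rho> q r M :: real
  assumes f_cpc: "closed_proper_convex f" and Psi_cpc: "closed_proper_convex \<Psi>"
    and A1: "\<forall>y \<in> edom \<Psi>. y \<in> interior (edom f) \<and>
               ((\<lambda>z. real_of_ereal (f z)) has_derivative (\<lambda>h. inner (gradf y) h)) (at y)"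
    and A2: "\<forall>y \<in> edom \<Psi>. argmin_lin (gradf y) \<Psi> \<noteq> {}"
    and c: "0 < c" "c < 1" and rho: "0 < \<rho>" "\<rho> < 1" and c_rho: "c + \<rho> > 1"
    and x0: "x 0 \<in> edom \<Psi>"
    and s_def: "\<forall>k. s k \<in> argmin_lin (gradf (x k)) \<Psi>"
    and x_step: "\<forall>k. x (Suc k) = (1 - \<theta> k) *\<^sub>R x k + \<theta> k *\<^sub>R s k"
    and theta01: "\<forall>k. \<theta> k \<in> {0..1}"
    and theta_hat_def: "\<forall>k. \<theta>h k = (GREATEST t. t \<in> {0..1} \<and>
          (1 - t) * dgap f \<Psi> (x k) (gradf (x k)) + Dcal f gradf \<Psi> (x k) (s k) t
            \<le> (1 - c * t) * dgap f \<Psi> (x k) (gradf (x k)))"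
    and theta_bounds: "\<forall>k. \<rho> * \<theta>h k \<le> \<theta> k \<and> \<theta> k \<le> \<theta>h k"
    and G_def: "\<forall>k. G k = Min ((\<lambda>i. dgap f \<Psi> (x k) (gradf (x i))) ` {..k})"
    and q: "q > 1" and r: "0 \<le> r" "r \<le> 1"
    and grow: "growth f gradf \<Psi> q r M"
  shows "(\<forall>k. G (Suc k) \<le> G k * (1 - (c + \<rho> - 1) *
              min 1 ((q * (1 - c) / M * pw (G k) (1 - r)) powr (1 / (q - 1)))))
       \<and> (r = 1 \<longrightarrow> (\<forall>k. G k \<le> G 0 * (1 - (c + \<rho> - 1) *
              min 1 ((q * (1 - c) / M) powr (1 / (q - 1)))) ^ k))
       \<and> (r < 1 \<longrightarrow>
            (\<exists>k. G k powr (1 - r) \<le> M / (q * (1 - c))) \<and>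
            (\<forall>k0. G k0 powr (1 - r) \<le> M / (q * (1 - c)) \<and>
                  (\<forall>j<k0. \<not> (G j powr (1 - r) \<le> M / (q * (1 - c)))) \<longrightarrow>
               (\<forall>k\<le>k0. G k \<le> G 0 * (1 - (c + \<rho> - 1)) ^ k) \<and>
               (\<forall>k\<ge>k0. G k \<le> (G k0 powr ((r - 1) / (q - 1))
                    + (1 - r) * (c + \<rho> - 1) / (q - 1) * (q * (1 - c) / M) powr (1 / (q - 1))
                      * real (k - k0)) powr ((q - 1) / (r - 1)))))"
proof -
  have "\<forall>y \<in> edom \<Psi>. y \<in> edom f \<and>
      ((\<lambda>z. real_of_ereal (f z)) has_derivative (\<lambda>h. inner (gradf y) h)) (at y)"
    using A1 interior_subset by blast
  then interpret conditional_gradient f \<Psi> gradf x s \<theta> \<theta>h c \<rho> q r M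
    using assms by unfold_locales auto
  have G: "G = best_gap" using G_def by (simp add: fun_eq_iff best_gap_def)
  define C where "C = q * (1 - c) / M"
  have M: "0 < M" using grow unfolding growth_def by simp
  have "c + \<rho> - 1 \<le> c * \<rho>" using mult_nonneg_nonneg[of "1 - c" "1 - \<rho>"] \<open>c < 1\<close> \<open>\<rho> < 1\<close>
    by (simp add: algebra_simps)
  then have step: "G (Suc k) \<le> G k * (1 - (c + \<rho> - 1) * min 1 ((C * pw (G k) (1 - r)) powr (1 / (q - 1))))"
    for k
  proof -
    let ?m = "min 1 ((C * pw (G k) (1 - r)) powr (1 / (q - 1)))"
    have "0 \<le> ?m * G k" using best_gap_nonneg[of k] unfolding G by simp
    with \<open>c + \<rho> - 1 \<le> c * \<rho>\<close> have "(c + \<rho> - 1) * (?m * G k) \<le> c * \<rho> * (?m * G k)"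
      by (rule mult_right_mono)
    then show ?thesis using best_gap_step[of k] unfolding G C_def by (simp add: algebra_simps)
  qed
  interpret gap_recursion G "c + \<rho> - 1" C q r
    using step best_gap_nonneg \<open>c < 1\<close> \<open>\<rho> < 1\<close> c_rho q r M unfolding G C_def by unfold_locales auto
  have threshold: "M / (q * (1 - c)) = 1 / C" unfolding C_def by simp
  show ?thesis
    unfolding threshold unfolding C_def[symmetric]
    using step linear_rate threshold_reached geometric_phase sublinear_phase by blast
qed

end
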